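(* Let $\mu$ be a finite Borel measure on $\mathbb R^n$ that is absolutely continuous with respect to Lebesgue measure and invariant under all orthogonal transformations of $\mathbb R^n$. Let $B$ be a closed Euclidean ball centered at the origin and let $T\subseteq\mathbb R^n$ be a measurable set that is star-shaped with respect to $0$ (i.e. $x\in T$ implies $sx\in T$ for all $s\in[0,1]$). Then \[ \mu(B\cap T)\,\mu(\mathbb R^n)\ge\mu(B)\,\mu(T). \] *)

theory Defs
  imports "HOL-Analysis.Analysis"
begin

end

theory Submission
  imports Defs
begin

(* Let mu be a finite, rotation-invariant Borel measure on R^n without an atom at the origin
   (absolute continuity is only used to exclude that atom), B = cball 0 r and T a measurable set
   star-shaped about 0.  Split mu into its parts alpha inside B and beta outside B.  The proof
   rests on a polar decomposition: pushing beta(R^n) alpha forward along x |-> (|x|, x/|x|) gives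
   the product of the radial distribution of alpha and the direction distribution of beta,
   because all rotation-invariant finite measures on the unit sphere are proportional.  Then
   alpha(R^n) beta(T) is the alpha-integral of beta(T); moving each point y of T outside B
   radially inward to radius |x| < |y| keeps it in T, and integrating the resulting indicator
   gives beta(R^n) alpha(T) by the polar decomposition.  So mu(B) mu(T - B) <= mu(R^n - B)
   mu(B \<inter> T), which rearranges to mu(B) mu(T) <= mu(B \<inter> T) mu(R^n). *)

definition rotation_invariant :: "(real^'n) measure \<Rightarrow> bool" where
  "rotation_invariant M \<longleftrightarrow>
     (\<forall>f A. orthogonal_transformation f \<longrightarrow> A \<in> sets borel \<longrightarrow> emeasure M (f -` A) = emeasure M A)"

lemma orthogonal_transformation_dist:
  "orthogonal_transformation f \<Longrightarrow> dist (f u) (f x) = dist u x"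
  by (metis dist_norm orthogonal_transformation_def linear_diff orthogonal_transformation_norm)

lemma orthogonal_transformation_borel:
  "orthogonal_transformation (f :: real^'n \<Rightarrow> real^'n) \<Longrightarrow> f \<in> borel_measurable borel"
  by (intro borel_measurable_continuous_onI linear_continuous_on)
     (simp add: orthogonal_transformation_def linear_conv_bounded_linear)

lemma orthogonal_transformation_sgn:
  "orthogonal_transformation f \<Longrightarrow> sgn (f x) = f (sgn x)"
  by (simp add: sgn_div_norm orthogonal_transformation_norm orthogonal_transformation_scaleR)

lemma radial_set_invariant:
  "orthogonal_transformation f \<Longrightarrow> f -` (norm -` S) = (norm -` S :: (real^'n) set)"
  by (auto simp: orthogonal_transformation_norm)

lemma rotation_invariant_restrict:
  fixes M :: "(real^'n) measure"
  assumes sM: "sets M = sets borel" and iM: "rotation_invariant M" and R: "R \<in> sets borel"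
    and R_inv: "\<And>f. orthogonal_transformation f \<Longrightarrow> f -` R = R"
  shows "rotation_invariant (density M (indicator R))"
  unfolding rotation_invariant_def
proof (intro allI impI)
  fix f :: "real^'n \<Rightarrow> real^'n" and A :: "(real^'n) set"
  assume f: "orthogonal_transformation f" and A: "A \<in> sets borel"
  have fA: "f -` A \<in> sets borel"
    using measurable_sets[OF orthogonal_transformation_borel[OF f] A] by simp
  have "f -` (R \<inter> A) = R \<inter> f -` A"
    using R_inv[OF f] by auto
  then have "emeasure M (R \<inter> f -` A) = emeasure M (R \<inter> A)"
    using iM f R A unfolding rotation_invariant_def by (metis sets.Int)
  then show "emeasure (density M (indicator R)) (f -` A) = emeasure (density M (indicator R)) A"
    using R A fA sM by (simp add: emeasure_restricted)
qed

definition radial_part :: "(real^'n) measure \<Rightarrow> real set \<Rightarrow> (real^'n) measure" where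
  "radial_part M S = density M (indicator (norm -` S))"

lemma radial_part:
  fixes M :: "(real^'n) measure"
  assumes sM: "sets M = sets borel" and fM: "finite_measure M" and iM: "rotation_invariant M"
    and zM: "emeasure M {0} = 0" and S: "S \<in> sets (borel :: real measure)"
  shows "sets (radial_part M S) = sets borel"
    and "\<And>X. X \<in> sets borel \<Longrightarrow> emeasure (radial_part M S) X = emeasure M (norm -` S \<inter> X)"
    and "finite_measure (radial_part M S)"
    and "rotation_invariant (radial_part M S)"
    and "emeasure (radial_part M S) {0} = 0"
    and "AE x in radial_part M S. norm x \<in> S"
proof -
  have R: "norm -` S \<in> sets M"
    using measurable_sets[OF borel_measurable_norm S] sM by simp
  show "sets (radial_part M S) = sets borel"
    unfolding radial_part_def using sM by simp
  show e: "emeasure (radial_part M S) X = emeasure M (norm -` S \<inter> X)" if "X \<in> sets borel" for X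
    unfolding radial_part_def using R that sM by (simp add: emeasure_restricted)
  show "finite_measure (radial_part M S)"
    unfolding radial_part_def using R by (rule finite_measure.finite_measure_restricted[OF fM])
  show "rotation_invariant (radial_part M S)"
    unfolding radial_part_def using R sM
    by (intro rotation_invariant_restrict[OF sM iM] radial_set_invariant) auto
  have "emeasure M (norm -` S \<inter> {0}) \<le> emeasure M {0}"
    using sM by (intro emeasure_mono) auto
  then show "emeasure (radial_part M S) {0} = 0"
    using e[of "{0}"] zM by simp
  show "AE x in radial_part M S. norm x \<in> S"
    unfolding radial_part_def using R by (subst AE_density) (auto simp: indicator_def)
qed

lemma cap_measure_eq:
  assumes "rotation_invariant a" "norm u = 1" "norm v = 1"
  shows "emeasure a (ball u e) = emeasure a (ball v e)"
proof -
  obtain f where f: "orthogonal_transformation f" "f u = v"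
    using orthogonal_transformation_exists[of u v] assms by auto
  have "f -` ball v e = ball u e"
    using f orthogonal_transformation_dist[OF f(1), of u] by (auto simp: mem_ball)
  then show ?thesis
    using assms(1) f unfolding rotation_invariant_def by (metis borel_open open_ball)
qed

(* Finitely many caps cover the sphere, so for a nonzero measure on the sphere they have
   positive measure. *)
lemma cap_measure_pos:
  fixes a :: "(real^'n) measure"
  assumes sa: "sets a = sets borel" and fa: "finite_measure a" and ia: "rotation_invariant a"
    and ca: "AE u in a. norm u = 1" and u0: "norm u0 = 1" and e: "e > 0"
    and pos: "measure a UNIV > 0"
  shows "measure a (ball u0 e) > 0"
proof -
  interpret finite_measure a by fact
  have "sphere (0::real^'n) 1 \<subseteq> (\<Union>c\<in>sphere 0 1. ball c e)"
    using e by force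
  then obtain C where C: "C \<subseteq> sphere (0::real^'n) 1" "finite C" "sphere 0 1 \<subseteq> (\<Union>c\<in>C. ball c e)"
    using compactE_image[OF compact_sphere, where f="\<lambda>c. ball c e"] by (metis open_ball)
  have caps: "(\<Union>c\<in>C. ball c e) \<in> sets a" and rest: "UNIV - sphere 0 1 \<in> sets a"
    unfolding sa by (auto intro: borel_open)
  have "space a = UNIV"
    using sets_eq_imp_space_eq[OF sa] by simp
  then have off_sphere: "{u \<in> space a. norm u \<noteq> 1} = UNIV - sphere 0 1"
    by auto
  have "emeasure a (UNIV - sphere 0 1) = 0"
    using AE_iff_measurable[OF rest off_sphere] ca by simp
  then have "measure a (UNIV - sphere 0 1) = 0"
    by (simp add: measure_def)
  have "measure a UNIV \<le> measure a ((\<Union>c\<in>C. ball c e) \<union> (UNIV - sphere 0 1))"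
    using C(3) caps rest by (intro finite_measure_mono) auto
  also have "\<dots> \<le> measure a (\<Union>c\<in>C. ball c e) + measure a (UNIV - sphere 0 1)"
    by (rule measure_Un_le[OF caps rest])
  also have "measure a (UNIV - sphere 0 1) = 0"
    by fact
  also have "measure a (\<Union>c\<in>C. ball c e) \<le> (\<Sum>c\<in>C. measure a (ball c e))"
    using C(2) sa by (intro measure_UNION_le) auto
  also have "\<dots> = (\<Sum>c\<in>C. measure a (ball u0 e))"
    using C(1) cap_measure_eq[OF ia _ u0] by (intro sum.cong) (auto simp: measure_def)
  finally have "0 < real (card C) * measure a (ball u0 e)"
    using pos by simp
  then show ?thesis
    by (simp add: zero_less_mult_iff)
qed

lemma ball_indicator_measurable:
  assumes F: "F \<in> sets borel"
  shows "(\<lambda>(u::real^'n, w::real^'n). indicator F w * indicator (ball u e) w :: ennreal)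
           \<in> borel_measurable (borel \<Otimes>\<^sub>M borel)"
proof -
  have "(\<lambda>(u::real^'n, w::real^'n). indicator F w * indicator (ball u e) w :: ennreal)
      = (\<lambda>p. indicator F (snd p) * indicator {p. dist (fst p) (snd p) < e} p)"
    by (auto simp: fun_eq_iff split: split_indicator)
  moreover have "{p::(real^'n) \<times> (real^'n). dist (fst p) (snd p) < e} \<in> sets (borel \<Otimes>\<^sub>M borel)"
    unfolding borel_prod by (intro borel_open open_Collect_less continuous_intros)
  ultimately show ?thesis
    using F by simp measurable
qed

(* Double counting, integrating first over the invariant measure b: each point u on the
   sphere sees a cap of b-measure b(cap). *)
lemma cap_double_integral:
  fixes a b :: "(real^'n) measure"
  assumes sa: "sets a = sets borel" and sb: "sets b = sets borel"
    and ib: "rotation_invariant b" and ca: "AE u in a. norm u = 1"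
    and u0: "norm u0 = 1" and G: "G \<in> sets borel"
  shows "(\<integral>\<^sup>+u. \<integral>\<^sup>+w. indicator G u * indicator (ball u e) w \<partial>b \<partial>a)
           = emeasure b (ball u0 e) * emeasure a G"
proof -
  have "(\<integral>\<^sup>+u. \<integral>\<^sup>+w. indicator G u * indicator (ball u e) w \<partial>b \<partial>a)
      = (\<integral>\<^sup>+u. indicator G u * emeasure b (ball u e) \<partial>a)"
    using sb by (intro nn_integral_cong) (simp add: nn_integral_cmult_indicator)
  also have "\<dots> = (\<integral>\<^sup>+u. emeasure b (ball u0 e) * indicator G u \<partial>a)"
    using ca by (intro nn_integral_cong_AE, eventually_elim)
      (simp add: cap_measure_eq[OF ib _ u0] mult.commute)
  also have "\<dots> = emeasure b (ball u0 e) * emeasure a G"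
    using sa G by (simp add: nn_integral_cmult_indicator)
  finally show ?thesis .
qed

(* The same count with the roles swapped, obtained by Fubini. *)
lemma cap_double_integral_swap:
  fixes a b :: "(real^'n) measure"
  assumes sa: "sets a = sets borel" and sb: "sets b = sets borel"
    and fa: "finite_measure a" and fb: "finite_measure b"
    and ia: "rotation_invariant a" and cb: "AE w in b. norm w = 1"
    and u0: "norm u0 = 1" and F: "F \<in> sets borel"
  shows "(\<integral>\<^sup>+u. \<integral>\<^sup>+w. indicator F w * indicator (ball u e) w \<partial>b \<partial>a)
           = emeasure a (ball u0 e) * emeasure b F"
proof -
  interpret A: finite_measure a by fact
  interpret B: finite_measure b by fact
  interpret pair_sigma_finite a b ..
  have "case_prod (\<lambda>u w. indicator F w * indicator (ball u e) w :: ennreal) \<in> borel_measurable (a \<Otimes>\<^sub>M b)"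
    using ball_indicator_measurable[OF F, of e]
    by (simp add: measurable_cong_sets[OF sets_pair_measure_cong[OF sa sb] refl])
  then have "(\<integral>\<^sup>+u. \<integral>\<^sup>+w. indicator F w * indicator (ball u e) w \<partial>b \<partial>a)
      = (\<integral>\<^sup>+w. \<integral>\<^sup>+u. indicator F w * indicator (ball w e) u \<partial>a \<partial>b)"
    by (simp add: Fubini' dist_commute mem_ball indicator_def)
  also have "\<dots> = emeasure a (ball u0 e) * emeasure b F"
    by (rule cap_double_integral[OF sb sa ia cb u0 F])
  finally show ?thesis .
qed

lemma ratio_transfer:
  fixes p q x y s t :: real
  assumes p: "p > 0" and le: "p * x \<le> q * y" and eq: "p * s = q * t" and t: "t \<ge> 0"
  shows "x * t \<le> s * y"
proof -
  have "p * (x * t) \<le> (q * y) * t"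
    using mult_right_mono[OF le t] by (simp only: ac_simps)
  also have "\<dots> = p * (s * y)"
    using eq by (metis mult.assoc mult.commute)
  finally show ?thesis
    using p by (rule mult_left_le_imp_le)
qed

(* Comparing the two double counts: b(F) a(R^n) <= b(R^n) a(F_e) for the open
   e-neighbourhood F_e of F. *)
lemma neighbourhood_ineq:
  fixes a b :: "(real^'n) measure"
  assumes sa: "sets a = sets borel" and sb: "sets b = sets borel"
    and fa: "finite_measure a" and fb: "finite_measure b"
    and ia: "rotation_invariant a" and ib: "rotation_invariant b"
    and ca: "AE u in a. norm u = 1" and cb: "AE w in b. norm w = 1"
    and F: "F \<in> sets borel" and e: "e > 0"
  shows "measure b F * measure a UNIV \<le> measure b UNIV * measure a (\<Union>w\<in>F. ball w e)"
proof -
  interpret A: finite_measure a by fact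
  interpret B: finite_measure b by fact
  obtain u0 :: "real^'n" where u0: "norm u0 = 1"
    using vector_choose_size[of 1] by auto
  define Fe where "Fe = (\<Union>w\<in>F. ball w e)"
  have Fe: "Fe \<in> sets borel"
    unfolding Fe_def by (intro borel_open open_UN) auto
  have "emeasure a (ball u0 e) * emeasure b F
      = (\<integral>\<^sup>+u. \<integral>\<^sup>+w. indicator F w * indicator (ball u e) w \<partial>b \<partial>a)"
    by (rule cap_double_integral_swap[OF sa sb fa fb ia cb u0 F, symmetric])
  also have "\<dots> \<le> (\<integral>\<^sup>+u. \<integral>\<^sup>+w. indicator Fe u * indicator (ball u e) w \<partial>b \<partial>a)"
    by (intro nn_integral_mono) (auto simp: Fe_def indicator_def dist_commute mem_ball)
  also have "\<dots> = emeasure b (ball u0 e) * emeasure a Fe"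
    by (rule cap_double_integral[OF sa sb ib ca u0 Fe])
  finally have le: "measure a (ball u0 e) * measure b F \<le> measure b (ball u0 e) * measure a Fe"
    by (simp add: A.emeasure_eq_measure B.emeasure_eq_measure ennreal_mult'[symmetric])
  have "emeasure a (ball u0 e) * emeasure b UNIV = emeasure b (ball u0 e) * emeasure a UNIV"
    using cap_double_integral_swap[OF sa sb fa fb ia cb u0, of UNIV e]
      cap_double_integral[OF sa sb ib ca u0, of UNIV e] by simp
  then have eq: "measure a (ball u0 e) * measure b UNIV = measure b (ball u0 e) * measure a UNIV"
    by (simp add: A.emeasure_eq_measure B.emeasure_eq_measure ennreal_mult'[symmetric])
  show ?thesis
  proof (cases "measure a UNIV > 0")
    case True
    then have "measure a (ball u0 e) > 0"
      by (rule cap_measure_pos[OF sa fa ia ca u0 e])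
    then show ?thesis
      unfolding Fe_def[symmetric] using le eq by (rule ratio_transfer) simp
  next
    case False
    then have "measure a UNIV = 0"
      using measure_nonneg[of a UNIV] by linarith
    then show ?thesis
      by simp
  qed
qed

lemma closed_Inter_neighbourhoods:
  fixes F :: "'a::metric_space set"
  assumes "closed F"
  shows "(\<Inter>k. \<Union>w\<in>F. ball w (1 / Suc k)) = F"
proof
  show "F \<subseteq> (\<Inter>k. \<Union>w\<in>F. ball w (1 / Suc k))"
    by force
  show "(\<Inter>k. \<Union>w\<in>F. ball w (1 / Suc k)) \<subseteq> F"
  proof
    fix u assume u: "u \<in> (\<Inter>k. \<Union>w\<in>F. ball w (1 / Suc k))"
    have "\<exists>w\<in>F. dist w u < e" if "e > 0" for e
    proof -
      obtain k where k: "inverse (real (Suc k)) < e"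
        using reals_Archimedean[OF \<open>e > 0\<close>] by blast
      obtain w where "w \<in> F" "dist w u < 1 / Suc k"
        using u by auto
      moreover have "1 / real (Suc k) < e"
        using k by (simp add: inverse_eq_divide)
      ultimately show ?thesis
        by (meson less_trans)
    qed
    then have "u \<in> closure F"
      by (simp add: closure_approachable)
    then show "u \<in> F"
      using assms by (simp add: closure_closed)
  qed
qed

(* Letting e tend to 0 gives the comparison on closed sets. *)
lemma closed_ineq:
  fixes a b :: "(real^'n) measure"
  assumes sa: "sets a = sets borel" and sb: "sets b = sets borel"
    and fa: "finite_measure a" and fb: "finite_measure b"
    and ia: "rotation_invariant a" and ib: "rotation_invariant b"
    and ca: "AE u in a. norm u = 1" and cb: "AE w in b. norm w = 1"
    and F: "closed F"
  shows "measure b F * measure a UNIV \<le> measure b UNIV * measure a F"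
proof -
  interpret A: finite_measure a by fact
  define Fk where "Fk k = (\<Union>w\<in>F. ball w (1 / Suc k))" for k :: nat
  have "range Fk \<subseteq> sets a"
    unfolding Fk_def sa by (auto intro: borel_open)
  moreover have "decseq Fk"
    unfolding Fk_def by (intro decseq_SucI UN_mono ball_subset_ball_iff[THEN iffD2]) (auto simp: frac_le)
  ultimately have "(\<lambda>k. measure a (Fk k)) \<longlonglongrightarrow> measure a (\<Inter>k. Fk k)"
    by (rule A.finite_Lim_measure_decseq)
  then have "(\<lambda>k. measure b UNIV * measure a (Fk k)) \<longlonglongrightarrow> measure b UNIV * measure a F"
    unfolding Fk_def closed_Inter_neighbourhoods[OF F] by (rule tendsto_mult_left)
  moreover have "measure b F * measure a UNIV \<le> measure b UNIV * measure a (Fk k)" for k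
    unfolding Fk_def using F by (intro neighbourhood_ineq[OF sa sb fa fb ia ib ca cb]) auto
  ultimately show ?thesis
    by (intro LIMSEQ_le_const) auto
qed

(* Uniqueness: rotation-invariant finite measures on the unit sphere are proportional,
   since the comparison holds in both directions on the intersection-stable generator of closed
   sets. *)
lemma sphere_measures_proportional:
  fixes a b :: "(real^'n) measure"
  assumes sa: "sets a = sets borel" and sb: "sets b = sets borel"
    and fa: "finite_measure a" and fb: "finite_measure b"
    and ia: "rotation_invariant a" and ib: "rotation_invariant b"
    and ca: "AE u in a. norm u = 1" and cb: "AE w in b. norm w = 1"
    and U: "U \<in> sets borel"
  shows "emeasure b UNIV * emeasure a U = emeasure a UNIV * emeasure b U"
proof -
  interpret A: finite_measure a by fact
  interpret B: finite_measure b by fact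
  define a' where "a' = density a (\<lambda>_. emeasure b UNIV)"
  define b' where "b' = density b (\<lambda>_. emeasure a UNIV)"
  have a': "emeasure a' X = emeasure b UNIV * emeasure a X" if "X \<in> sets borel" for X
    unfolding a'_def using that sa by (simp add: emeasure_density_const)
  have b': "emeasure b' X = emeasure a UNIV * emeasure b X" if "X \<in> sets borel" for X
    unfolding b'_def using that sb by (simp add: emeasure_density_const)
  have closed_sets: "sets borel = sigma_sets UNIV (Collect closed)"
    by (subst borel_eq_closed) (simp add: sets_measure_of)
  have "a' = b'"
  proof (rule measure_eqI_generator_eq[where E="Collect closed" and \<Omega>=UNIV and A="\<lambda>_. UNIV"])
    fix X :: "(real^'n) set" assume "X \<in> Collect closed"
    then have X: "closed X" by simp
    have "measure b UNIV * measure a X = measure a UNIV * measure b X"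
      using closed_ineq[OF sa sb fa fb ia ib ca cb X] closed_ineq[OF sb sa fb fa ib ia cb ca X]
      by (simp add: algebra_simps)
    then show "emeasure a' X = emeasure b' X"
      using X by (simp add: a' b' borel_closed A.emeasure_eq_measure B.emeasure_eq_measure
          ennreal_mult'[symmetric])
  qed (use sa sb closed_sets a' in \<open>auto simp: a'_def b'_def Int_stable_def
      A.emeasure_eq_measure B.emeasure_eq_measure ennreal_mult_eq_top_iff\<close>)
  then show ?thesis
    using a'[OF U] b'[OF U] by simp
qed

lemma direction_distr_rotation_invariant:
  fixes M :: "(real^'n) measure"
  assumes sM: "sets M = sets borel" and iM: "rotation_invariant M"
  shows "rotation_invariant (distr M borel sgn)"
  unfolding rotation_invariant_def
proof (intro allI impI)
  fix f :: "real^'n \<Rightarrow> real^'n" and A :: "(real^'n) set"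
  assume f: "orthogonal_transformation f" and A: "A \<in> sets borel"
  have sgn_M: "sgn \<in> measurable M borel"
    unfolding measurable_cong_sets[OF sM refl] by simp
  have spM: "space M = UNIV"
    using sets_eq_imp_space_eq[OF sM] by simp
  have fA: "f -` A \<in> sets borel"
    using measurable_sets[OF orthogonal_transformation_borel[OF f] A] by simp
  have sA: "sgn -` A \<in> sets borel"
    using measurable_sets[OF borel_measurable_sgn A] by simp
  have "sgn -` (f -` A) = f -` (sgn -` A)"
    using orthogonal_transformation_sgn[OF f] by auto
  then have "emeasure M (sgn -` (f -` A)) = emeasure M (sgn -` A)"
    using iM f sA unfolding rotation_invariant_def by simp
  then show "emeasure (distr M borel sgn) (f -` A) = emeasure (distr M borel sgn) A"
    using sgn_M fA A by (simp add: emeasure_distr spM)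
qed

lemma direction_distr_on_sphere:
  fixes M :: "(real^'n) measure"
  assumes sM: "sets M = sets borel" and zM: "emeasure M {0} = 0"
  shows "AE u in distr M borel sgn. norm u = 1"
proof -
  have "sgn \<in> measurable M borel"
    unfolding measurable_cong_sets[OF sM refl] by simp
  moreover have "AE x in M. norm (sgn x) = 1"
    by (rule AE_I[where N="{0}"]) (use zM sM in \<open>auto simp: norm_sgn\<close>)
  ultimately show ?thesis
    by (subst AE_distr_iff) auto
qed

lemma directions_proportional:
  fixes \<alpha> \<beta> :: "(real^'n) measure"
  assumes sa: "sets \<alpha> = sets borel" and sb: "sets \<beta> = sets borel"
    and fa: "finite_measure \<alpha>" and fb: "finite_measure \<beta>"
    and ia: "rotation_invariant \<alpha>" and ib: "rotation_invariant \<beta>"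
    and za: "emeasure \<alpha> {0} = 0" and zb: "emeasure \<beta> {0} = 0"
    and V: "V \<in> sets borel"
  shows "emeasure \<beta> UNIV * emeasure \<alpha> (sgn -` V) = emeasure \<alpha> UNIV * emeasure \<beta> (sgn -` V)"
proof -
  have sgn_a: "sgn \<in> measurable \<alpha> borel" and sgn_b: "sgn \<in> measurable \<beta> borel"
    unfolding measurable_cong_sets[OF sa refl] measurable_cong_sets[OF sb refl] by simp_all
  have spa: "space \<alpha> = UNIV" and spb: "space \<beta> = UNIV"
    using sets_eq_imp_space_eq[OF sa] sets_eq_imp_space_eq[OF sb] by simp_all
  have "emeasure (distr \<beta> borel sgn) UNIV * emeasure (distr \<alpha> borel sgn) V
      = emeasure (distr \<alpha> borel sgn) UNIV * emeasure (distr \<beta> borel sgn) V"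
  proof (rule sphere_measures_proportional)
    show "finite_measure (distr \<alpha> borel sgn)" "finite_measure (distr \<beta> borel sgn)"
      using finite_measure.finite_measure_distr[OF fa sgn_a]
        finite_measure.finite_measure_distr[OF fb sgn_b] by simp_all
  qed (simp_all add: V direction_distr_rotation_invariant[OF sa ia]
      direction_distr_rotation_invariant[OF sb ib] direction_distr_on_sphere[OF sa za]
      direction_distr_on_sphere[OF sb zb])
  then show ?thesis
    using sgn_a sgn_b V by (simp add: emeasure_distr spa spb)
qed

(* Radius and direction are independent: apply proportionality to the radial part of alpha. *)
lemma radial_direction_factorization:
  fixes \<alpha> \<beta> :: "(real^'n) measure"
  assumes sa: "sets \<alpha> = sets borel" and sb: "sets \<beta> = sets borel"
    and fa: "finite_measure \<alpha>" and fb: "finite_measure \<beta>"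
    and ia: "rotation_invariant \<alpha>" and ib: "rotation_invariant \<beta>"
    and za: "emeasure \<alpha> {0} = 0" and zb: "emeasure \<beta> {0} = 0"
    and A: "A \<in> sets (borel :: real measure)" and V: "V \<in> sets borel"
  shows "emeasure \<beta> UNIV * emeasure \<alpha> (norm -` A \<inter> sgn -` V)
           = emeasure \<alpha> (norm -` A) * emeasure \<beta> (sgn -` V)"
proof -
  note part = radial_part[OF sa fa ia za A]
  have "emeasure \<beta> UNIV * emeasure (radial_part \<alpha> A) (sgn -` V)
      = emeasure (radial_part \<alpha> A) UNIV * emeasure \<beta> (sgn -` V)"
    by (rule directions_proportional[OF part(1) sb part(3) fb part(4) ib part(5) zb V])
  moreover have "sgn -` V \<in> sets borel"
    using measurable_sets[OF borel_measurable_sgn V] by simp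
  ultimately show ?thesis
    using part(2)[of UNIV] part(2)[of "sgn -` V"] by simp
qed

lemma polar_pair_measure:
  fixes \<alpha> \<beta> :: "(real^'n) measure"
  assumes sa: "sets \<alpha> = sets borel" and sb: "sets \<beta> = sets borel"
    and fa: "finite_measure \<alpha>" and fb: "finite_measure \<beta>"
    and ia: "rotation_invariant \<alpha>" and ib: "rotation_invariant \<beta>"
    and za: "emeasure \<alpha> {0} = 0" and zb: "emeasure \<beta> {0} = 0"
  shows "distr \<alpha> borel norm \<Otimes>\<^sub>M distr \<beta> borel sgn
           = distr (density \<alpha> (\<lambda>_. emeasure \<beta> UNIV)) borel (\<lambda>x. (norm x, sgn x))"
proof (rule pair_measure_eqI)
  have norm_a: "norm \<in> measurable \<alpha> borel" and sgn_b: "sgn \<in> measurable \<beta> borel"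
    unfolding measurable_cong_sets[OF sa refl] measurable_cong_sets[OF sb refl] by simp_all
  have polar_a: "(\<lambda>x. (norm x, sgn x)) \<in> measurable \<alpha> borel"
    unfolding measurable_cong_sets[OF sa refl] by measurable
  have spa: "space \<alpha> = UNIV" and spb: "space \<beta> = UNIV"
    using sets_eq_imp_space_eq[OF sa] sets_eq_imp_space_eq[OF sb] by simp_all
  show "sigma_finite_measure (distr \<alpha> borel norm)" "sigma_finite_measure (distr \<beta> borel sgn)"
    using finite_measure.finite_measure_distr[OF fa norm_a] finite_measure.finite_measure_distr[OF fb sgn_b]
    by (simp_all add: finite_measure.axioms(1))
  show "sets (distr \<alpha> borel norm \<Otimes>\<^sub>M distr \<beta> borel sgn)
      = sets (distr (density \<alpha> (\<lambda>_. emeasure \<beta> UNIV)) borel (\<lambda>x. (norm x, sgn x)))"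
    unfolding sets_distr sets_pair_measure_cong[OF sets_distr sets_distr] borel_prod ..
  fix A V
  assume A: "A \<in> sets (distr \<alpha> borel norm)" and V: "V \<in> sets (distr \<beta> borel sgn)"
  have "(\<lambda>x. (norm x, sgn x)) -` (A \<times> V) = norm -` A \<inter> sgn -` V"
    by auto
  moreover have "A \<times> V \<in> sets (borel :: (real \<times> (real^'n)) measure)"
    using A V by (simp flip: borel_prod)
  moreover have "norm -` A \<inter> sgn -` V \<in> sets \<alpha>"
    using A V norm_a sgn_b measurable_sets[OF norm_a] measurable_sets[OF sgn_b] by (auto simp: spa spb sa sb)
  ultimately have "emeasure (distr (density \<alpha> (\<lambda>_. emeasure \<beta> UNIV)) borel (\<lambda>x. (norm x, sgn x))) (A \<times> V)
      = emeasure \<beta> UNIV * emeasure \<alpha> (norm -` A \<inter> sgn -` V)"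
    using polar_a by (simp add: emeasure_distr spa emeasure_density_const)
  also have "\<dots> = emeasure \<alpha> (norm -` A) * emeasure \<beta> (sgn -` V)"
    using A V by (intro radial_direction_factorization[OF sa sb fa fb ia ib za zb]) simp_all
  also have "\<dots> = emeasure (distr \<alpha> borel norm) A * emeasure (distr \<beta> borel sgn) V"
    using A V norm_a sgn_b by (simp add: emeasure_distr spa spb)
  finally show "emeasure (distr \<alpha> borel norm) A * emeasure (distr \<beta> borel sgn) V
      = emeasure (distr (density \<alpha> (\<lambda>_. emeasure \<beta> UNIV)) borel (\<lambda>x. (norm x, sgn x))) (A \<times> V)"
    by simp
qed

lemma polar_integral:
  fixes \<alpha> \<beta> :: "(real^'n) measure" and g :: "real \<times> (real^'n) \<Rightarrow> ennreal"
  assumes sa: "sets \<alpha> = sets borel" and sb: "sets \<beta> = sets borel"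
    and fa: "finite_measure \<alpha>" and fb: "finite_measure \<beta>"
    and ia: "rotation_invariant \<alpha>" and ib: "rotation_invariant \<beta>"
    and za: "emeasure \<alpha> {0} = 0" and zb: "emeasure \<beta> {0} = 0"
    and g: "g \<in> borel_measurable borel"
  shows "(\<integral>\<^sup>+x. \<integral>\<^sup>+y. g (norm x, sgn y) \<partial>\<beta> \<partial>\<alpha>) = emeasure \<beta> UNIV * (\<integral>\<^sup>+x. g (norm x, sgn x) \<partial>\<alpha>)"
proof -
  define \<rho> where "\<rho> = distr \<alpha> (borel :: real measure) norm"
  define \<nu> where "\<nu> = distr \<beta> (borel :: (real^'n) measure) sgn"
  have norm_a: "norm \<in> measurable \<alpha> borel" and sgn_b: "sgn \<in> measurable \<beta> borel"
    unfolding measurable_cong_sets[OF sa refl] measurable_cong_sets[OF sb refl] by simp_all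
  have polar_a: "(\<lambda>x. (norm x, sgn x)) \<in> measurable \<alpha> borel"
    unfolding measurable_cong_sets[OF sa refl] by measurable
  interpret N: finite_measure \<nu>
    unfolding \<nu>_def using fb sgn_b by (rule finite_measure.finite_measure_distr)
  have g_pair: "g \<in> borel_measurable (borel \<Otimes>\<^sub>M borel)"
    using g by (simp add: borel_prod)
  have g_rho_nu: "g \<in> borel_measurable (\<rho> \<Otimes>\<^sub>M \<nu>)"
    using g_pair unfolding \<rho>_def \<nu>_def
      measurable_cong_sets[OF sets_pair_measure_cong[OF sets_distr sets_distr] refl] .
  have g_borel_nu: "g \<in> borel_measurable (borel \<Otimes>\<^sub>M \<nu>)"
    using g_pair unfolding \<nu>_def
      measurable_cong_sets[OF sets_pair_measure_cong[OF refl sets_distr] refl] .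
  have "(\<integral>\<^sup>+x. \<integral>\<^sup>+y. g (norm x, sgn y) \<partial>\<beta> \<partial>\<alpha>) = (\<integral>\<^sup>+x. \<integral>\<^sup>+u. g (norm x, u) \<partial>\<nu> \<partial>\<alpha>)"
    unfolding \<nu>_def using sgn_b g by (intro nn_integral_cong) (simp add: nn_integral_distr)
  also have "\<dots> = (\<integral>\<^sup>+t. \<integral>\<^sup>+u. g (t, u) \<partial>\<nu> \<partial>\<rho>)"
    unfolding \<rho>_def using norm_a N.borel_measurable_nn_integral_fst[OF g_borel_nu]
    by (simp add: nn_integral_distr)
  also have "\<dots> = integral\<^sup>N (\<rho> \<Otimes>\<^sub>M \<nu>) g"
    by (rule N.nn_integral_fst[OF g_rho_nu])
  also have "\<dots> = (\<integral>\<^sup>+x. g (norm x, sgn x) \<partial>density \<alpha> (\<lambda>_. emeasure \<beta> UNIV))"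
    unfolding \<rho>_def \<nu>_def polar_pair_measure[OF sa sb fa fb ia ib za zb]
    using polar_a g by (simp add: nn_integral_distr)
  also have "\<dots> = emeasure \<beta> UNIV * (\<integral>\<^sup>+x. g (norm x, sgn x) \<partial>\<alpha>)"
    using polar_a g by (simp add: nn_integral_density nn_integral_cmult)
  finally show ?thesis .
qed

lemma norm_scaleR_sgn: "norm x *\<^sub>R sgn x = (x :: 'a::real_normed_vector)"
  by (cases "x = 0") (simp_all add: sgn_div_norm)

lemma star_shaped_shrink:
  fixes T :: "'a::real_normed_vector set"
  assumes T_star: "\<And>x s. x \<in> T \<Longrightarrow> 0 \<le> s \<Longrightarrow> s \<le> 1 \<Longrightarrow> s *\<^sub>R x \<in> T"
    and y: "y \<in> T" and t: "0 \<le> t" "t \<le> norm y"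
  shows "t *\<^sub>R sgn y \<in> T"
proof (cases "y = 0")
  case True
  then show ?thesis
    using T_star[OF y, of 0] by simp
next
  case False
  then have "t *\<^sub>R sgn y = (t / norm y) *\<^sub>R y"
    by (simp add: sgn_div_norm divide_inverse)
  then show ?thesis
    using T_star[OF y] t False by (simp add: divide_le_eq_1)
qed

lemma star_shaped_shell_ineq:
  fixes \<alpha> \<beta> :: "(real^'n) measure" and T :: "(real^'n) set"
  assumes sa: "sets \<alpha> = sets borel" and sb: "sets \<beta> = sets borel"
    and fa: "finite_measure \<alpha>" and fb: "finite_measure \<beta>"
    and ia: "rotation_invariant \<alpha>" and ib: "rotation_invariant \<beta>"
    and za: "emeasure \<alpha> {0} = 0" and zb: "emeasure \<beta> {0} = 0"
    and inner: "AE x in \<alpha>. norm x \<le> r" and outer: "AE y in \<beta>. r < norm y"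
    and T: "T \<in> sets borel"
    and T_star: "\<And>x s. x \<in> T \<Longrightarrow> 0 \<le> s \<Longrightarrow> s \<le> 1 \<Longrightarrow> s *\<^sub>R x \<in> T"
  shows "emeasure \<alpha> UNIV * emeasure \<beta> T \<le> emeasure \<beta> UNIV * emeasure \<alpha> T"
proof -
  have spa: "space \<alpha> = UNIV"
    using sets_eq_imp_space_eq[OF sa] by simp
  have "emeasure \<alpha> UNIV * emeasure \<beta> T = (\<integral>\<^sup>+x. emeasure \<beta> T \<partial>\<alpha>)"
    by (simp add: spa mult.commute)
  also have "\<dots> \<le> (\<integral>\<^sup>+x. \<integral>\<^sup>+y. indicator T (norm x *\<^sub>R sgn y) \<partial>\<beta> \<partial>\<alpha>)"
    using inner
  proof (intro nn_integral_mono_AE, eventually_elim)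
    case (elim x)
    then have x_inner: "norm x \<le> r" by simp
    have "emeasure \<beta> T = (\<integral>\<^sup>+y. indicator T y \<partial>\<beta>)"
      using T sb by simp
    also have "\<dots> \<le> (\<integral>\<^sup>+y. indicator T (norm x *\<^sub>R sgn y) \<partial>\<beta>)"
      using outer
      by (intro nn_integral_mono_AE, eventually_elim)
        (use x_inner in \<open>auto simp: indicator_def intro!: star_shaped_shrink[OF T_star]\<close>)
    finally show ?case .
  qed
  also have "\<dots> = emeasure \<beta> UNIV * (\<integral>\<^sup>+x. indicator T (norm x *\<^sub>R sgn x) \<partial>\<alpha>)"
  proof -
    have "(\<lambda>z::real \<times> (real^'n). indicator T (fst z *\<^sub>R snd z) :: ennreal) \<in> borel_measurable borel"
      using T unfolding borel_prod[symmetric] by measurable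
    from polar_integral[OF sa sb fa fb ia ib za zb this] show ?thesis
      by simp
  qed
  also have "\<dots> = emeasure \<beta> UNIV * emeasure \<alpha> T"
    using T sa by (simp add: norm_scaleR_sgn)
  finally show ?thesis .
qed

lemma absolutely_continuous_point_null:
  fixes M :: "'a::euclidean_space measure"
  assumes "absolutely_continuous lborel M"
  shows "emeasure M {x} = 0"
proof -
  have "{x} \<in> null_sets lborel"
    by (simp add: null_sets_def)
  then show ?thesis
    using assms unfolding absolutely_continuous_def by (blast intro: null_setsD1)
qed

lemma correlation_from_split:
  fixes M :: "'a measure"
  assumes "finite_measure M" and B: "B \<in> sets M" and T: "T \<in> sets M"
    and split: "measure M B * measure M (T - B) \<le> measure M (space M - B) * measure M (B \<inter> T)"
  shows "measure M B * measure M T \<le> measure M (B \<inter> T) * measure M (space M)"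
proof -
  interpret finite_measure M by fact
  have diff: "measure M T = measure M (T - B) + measure M (B \<inter> T)"
    using finite_measure_Diff'[OF T B] by (simp add: Int_commute)
  have compl: "measure M (space M) = measure M (space M - B) + measure M B"
    using finite_measure_compl[OF B] by simp
  have "measure M B * measure M T = measure M B * measure M (T - B) + measure M B * measure M (B \<inter> T)"
    unfolding diff by (simp add: algebra_simps)
  also have "\<dots> \<le> measure M (space M - B) * measure M (B \<inter> T) + measure M B * measure M (B \<inter> T)"
    using split by simp
  also have "\<dots> = measure M (B \<inter> T) * measure M (space M)"
    unfolding compl by (simp add: algebra_simps)
  finally show ?thesis .
qed

lemma ball_shell_comparison:
  fixes M :: "(real^'n) measure" and r :: real and T :: "(real^'n) set"
  assumes borel_M: "sets M = sets borel" and fin: "finite_measure M"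
    and iM: "rotation_invariant M" and zM: "emeasure M {0} = 0"
    and T_meas: "T \<in> sets borel"
    and T_star: "\<And>x s. x \<in> T \<Longrightarrow> 0 \<le> s \<Longrightarrow> s \<le> 1 \<Longrightarrow> s *\<^sub>R x \<in> T"
  shows "measure M (cball 0 r) * measure M (T - cball 0 r)
           \<le> measure M (space M - cball 0 r) * measure M (cball 0 r \<inter> T)"
proof -
  interpret finite_measure M by fact
  have spM: "space M = UNIV"
    using sets_eq_imp_space_eq[OF borel_M] by simp
  have ball: "norm -` {..r} = cball 0 r" and shell: "norm -` {r<..} = space M - cball 0 r"
    by (auto simp: spM mem_cball)
  note inside = radial_part[OF borel_M fin iM zM atMost_borel[of r], unfolded ball]
  note outside = radial_part[OF borel_M fin iM zM greaterThan_borel[of r], unfolded shell]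
  have "emeasure (radial_part M {..r}) UNIV * emeasure (radial_part M {r<..}) T
      \<le> emeasure (radial_part M {r<..}) UNIV * emeasure (radial_part M {..r}) T"
  proof (rule star_shaped_shell_ineq[OF inside(1) outside(1) inside(3) outside(3) inside(4)
        outside(4) inside(5) outside(5) _ _ T_meas T_star])
    show "AE x in radial_part M {..r}. norm x \<le> r"
      using inside(6) by (rule eventually_mono) simp
    show "AE x in radial_part M {r<..}. r < norm x"
      using outside(6) by (rule eventually_mono) simp
  qed
  moreover have "(space M - cball 0 r) \<inter> T = T - cball 0 r"
    by (auto simp: spM)
  ultimately have "emeasure M (cball 0 r) * emeasure M (T - cball 0 r)
      \<le> emeasure M (space M - cball 0 r) * emeasure M (cball 0 r \<inter> T)"
    using inside(2)[of UNIV] inside(2)[OF T_meas] outside(2)[of UNIV] outside(2)[OF T_meas] by simp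
  then show ?thesis
    by (simp add: emeasure_eq_measure ennreal_mult'[symmetric])
qed

theorem mainTheorem10:
  fixes M :: "(real ^ 'n) measure" and r :: real and T :: "(real ^ 'n) set"
  assumes borel_M: "sets M = sets borel"
    and fin: "finite_measure M"
    and ac: "absolutely_continuous lborel M"
    and inv: "\<And>f A. orthogonal_transformation f \<Longrightarrow> A \<in> sets borel \<Longrightarrow>
                 emeasure M (f -` A) = emeasure M A"
    and T_meas: "T \<in> sets borel"
    and T_star: "\<And>x s. x \<in> T \<Longrightarrow> 0 \<le> s \<Longrightarrow> s \<le> 1 \<Longrightarrow> s *\<^sub>R x \<in> T"
  shows "measure M (cball 0 r \<inter> T) * measure M UNIV \<ge> measure M (cball 0 r) * measure M T"
proof -
  have iM: "rotation_invariant M"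
    using inv unfolding rotation_invariant_def by blast
  have zM: "emeasure M {0} = 0"
    by (rule absolutely_continuous_point_null[OF ac])
  have "space M = UNIV"
    using sets_eq_imp_space_eq[OF borel_M] by simp
  then show ?thesis
    using correlation_from_split[OF fin _ _ ball_shell_comparison[OF borel_M fin iM zM T_meas T_star]]
      borel_M T_meas by simp
qed

end
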